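(* Let $A=(S,f_c,f_d)$ be any self-similar cellular automaton with $\{0,1\}\subseteq S$, and let $k_0\ge 0$. Let $\mathcal{C}$ be the set of configurations $c:\mathbb{Z}\to\{0,1\}$ that are either the all-zero configuration $0^\infty$ or have exactly one cell equal to $1$, that cell having positive index. Then it is impossible that, for every $c\in\mathcal{C}$, the state of cycle $(0,k_0)$ is deterministic for initial configuration $c$ and its common value equals $1$ when $c\neq 0^\infty$ and equals $0$ when $c=0^\infty$.
   Context: A self-similar cellular automaton is a triple $A=(S,f_c,f_d)$ with $S$ a finite set of states and $f_c,f_d:S^3\to S$. Cells are indexed by $j\in\mathbb{Z}$; cell $j$ has cycles $[k/2^j,(k+1)/2^j)$, and the $k$-th cycle of cell $j$ is identified with the pair $(j,k)$. The automaton is started at time $0$; the set of cycles is $C=\{(i,k): i\in\mathbb{Z},\ k\in\mathbb{Z}_{\ge 0}\}$. Given an initial configuration $c:\mathbb{Z}\to S$, an evolution of $A$ from $c$ is a map $s:C\to S$ with $s(i,0)=c(i)$ for all $i$ and, for all $(i,k)$ with $k\ge1$, $s(i,k)=f_c\big(s(i-1,\lfloor (k-1)/2\rfloor),s(i,k-1),s(i+1,2k-1)\big)$ if $k$ is even and $s(i,k)=f_d(\text{same arguments})$ if $k$ is odd. The state of cycle $(i_0,k_0)$ is deterministic for initial configuration $c$ if $s(i_0,k_0)$ takes the same value for all evolutions $s$ of $A$ from $c$ (its common value). *)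

theory Defs
  imports Main
begin

text \<open>A self-similar cellular automaton: finite state type 'a, rules fc, fd.
  Cycle (i,k) is represented by arguments i::int, k::nat.\<close>

definition is_evolution ::
  "('a \<Rightarrow> 'a \<Rightarrow> 'a \<Rightarrow> 'a) \<Rightarrow> ('a \<Rightarrow> 'a \<Rightarrow> 'a \<Rightarrow> 'a) \<Rightarrow> (int \<Rightarrow> 'a) \<Rightarrow> (int \<Rightarrow> nat \<Rightarrow> 'a) \<Rightarrow> bool" where
  "is_evolution fc fd c s \<longleftrightarrow>
     (\<forall>i. s i 0 = c i) \<and>
     (\<forall>i k. k \<ge> 1 \<longrightarrow>
        s i k = (if even k then fc else fd)
                  (s (i - 1) ((k - 1) div 2)) (s i (k - 1)) (s (i + 1) (2 * k - 1)))"

definition deterministic ::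
  "('a \<Rightarrow> 'a \<Rightarrow> 'a \<Rightarrow> 'a) \<Rightarrow> ('a \<Rightarrow> 'a \<Rightarrow> 'a \<Rightarrow> 'a) \<Rightarrow> (int \<Rightarrow> 'a) \<Rightarrow> int \<Rightarrow> nat \<Rightarrow> bool" where
  "deterministic fc fd c i0 k0 \<longleftrightarrow>
     (\<forall>s s'. is_evolution fc fd c s \<longrightarrow> is_evolution fc fd c s' \<longrightarrow> s i0 k0 = s' i0 k0)"

definition deterministic_with_value ::
  "('a \<Rightarrow> 'a \<Rightarrow> 'a \<Rightarrow> 'a) \<Rightarrow> ('a \<Rightarrow> 'a \<Rightarrow> 'a \<Rightarrow> 'a) \<Rightarrow> (int \<Rightarrow> 'a) \<Rightarrow> int \<Rightarrow> nat \<Rightarrow> 'a \<Rightarrow> bool" where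
  "deterministic_with_value fc fd c i0 k0 v \<longleftrightarrow>
     deterministic fc fd c i0 k0 \<and> (\<exists>s. is_evolution fc fd c s \<and> s i0 k0 = v)"


end

theory Submission
  imports Defs "HOL-Library.Diagonal_Subsequence" "HOL-Library.Countable" "HOL-Library.Infinite_Set"
begin

(* The proof is a compactness argument.  Suppose the cycle (0,k0) is
   deterministic with value one for every configuration having a single one
   at a positive cell j.  Choose for each j an evolution s_j reaching one at
   (0,k0).  Since the states form a finite set and the cycles a countable
   set, a diagonal argument extracts a subsequence of (s_j) that converges
   pointwise (i.e. is eventually constant at every cycle).  The update rule
   of an evolution only involves finitely many cycles, so the pointwise limit
   is again an evolution, namely of the pointwise limit of the initial
   configurations, which is the all-zero configuration.  The limit still has
   value one at (0,k0), contradicting determinism with value zero for the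
   all-zero configuration. *)

lemma constant_subseq:
  fixes g :: "nat \<Rightarrow> 'a::finite" and s :: "nat \<Rightarrow> nat"
  assumes "strict_mono s"
  shows "\<exists>r :: nat \<Rightarrow> nat. strict_mono r \<and> (\<forall>m. g ((s \<circ> r) m) = g ((s \<circ> r) 0))"
proof -
  obtain y where y: "infinite ((\<lambda>m. g (s m)) -` {y})"
    using inf_img_fin_domE[of "\<lambda>m. g (s m)" UNIV] by auto
  define r where "r = enumerate ((\<lambda>m. g (s m)) -` {y})"
  have "strict_mono r" unfolding r_def using strict_mono_enumerate[OF y] .
  moreover have "\<forall>m. g ((s \<circ> r) m) = g ((s \<circ> r) 0)"
    unfolding r_def using enumerate_in_set[OF y] by simp
  ultimately show ?thesis by blast
qed

text \<open>Built by diagonalising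
  constant_subseq along an enumeration of the index set.\<close>

lemma pointwise_convergent_subseq:
  fixes t :: "nat \<Rightarrow> 'b::countable \<Rightarrow> 'a::finite"
  shows "\<exists>d L. strict_mono d \<and> (\<forall>x. \<forall>\<^sub>F m in sequentially. t (d m) x = L x)"
proof -
  define P where "P n r \<longleftrightarrow> (\<forall>m. t (r m) (from_nat n) = t (r 0) (from_nat n))"
    for n and r :: "nat \<Rightarrow> nat"
  interpret subseqs P
  proof
    fix n and s :: "nat \<Rightarrow> nat"
    assume "strict_mono s"
    then show "\<exists>r. strict_mono r \<and> P n (s \<circ> r)"
      using constant_subseq[of s "\<lambda>q. t q (from_nat n)"] unfolding P_def by auto
  qed
  have stable: "P n (s \<circ> r)" if "P n s" for n s and r :: "nat \<Rightarrow> nat"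
    using that unfolding P_def by (metis comp_apply)
  define L where "L x = t (diagseq (Suc (to_nat x))) x" for x
  have "\<forall>\<^sub>F m in sequentially. t (diagseq m) x = L x" for x
  proof -
    have diag: "P (to_nat x) (diagseq \<circ> (+) (Suc (to_nat x)))"
      using diagseq_holds[OF stable] .
    have "t (diagseq (Suc (to_nat x) + p)) x = L x" for p
      using diag unfolding P_def L_def comp_def by simp
    then have "t (diagseq m) x = L x" if "Suc (to_nat x) \<le> m" for m
      using that le_Suc_ex by blast
    then show ?thesis unfolding eventually_sequentially by blast
  qed
  then show ?thesis using subseq_diagseq by blast
qed

lemma evolution_initial: "is_evolution fc fd c s \<Longrightarrow> s i 0 = c i"
  unfolding is_evolution_def by blast

lemma evolution_step:
  "is_evolution fc fd c s \<Longrightarrow> 1 \<le> k \<Longrightarrow>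
     s i k = (if even k then fc else fd)
               (s (i - 1) ((k - 1) div 2)) (s i (k - 1)) (s (i + 1) (2 * k - 1))"
  unfolding is_evolution_def by blast

text \<open>This holds because each update equation involves
  only four cycles.\<close>

lemma evolution_pointwise_limit:
  assumes evol: "\<And>m. is_evolution fc fd (c m) (s m)"
    and conf: "\<And>i. \<forall>\<^sub>F m in sequentially. c m i = c' i"
    and lim: "\<And>i k. \<forall>\<^sub>F m in sequentially. s m i k = L i k"
  shows "is_evolution fc fd c' L"
  unfolding is_evolution_def
proof (intro conjI allI impI)
  fix i
  have "\<forall>\<^sub>F m in sequentially. L i 0 = c' i"
    using conf[of i] lim[of i 0]
    by eventually_elim (metis evolution_initial[OF evol])
  then show "L i 0 = c' i" by simp
next
  fix i k
  assume "1 \<le> (k::nat)"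
  have "\<forall>\<^sub>F m in sequentially. L i k = (if even k then fc else fd)
          (L (i - 1) ((k - 1) div 2)) (L i (k - 1)) (L (i + 1) (2 * k - 1))"
    using lim[of i k] lim[of "i - 1" "(k - 1) div 2"] lim[of i "k - 1"]
      lim[of "i + 1" "2 * k - 1"]
    by eventually_elim (metis evolution_step[OF evol \<open>1 \<le> k\<close>])
  then show "L i k = (if even k then fc else fd)
          (L (i - 1) ((k - 1) div 2)) (L i (k - 1)) (L (i + 1) (2 * k - 1))"
    by simp
qed

lemma single_cell_escapes:
  fixes d :: "nat \<Rightarrow> nat"
  assumes "strict_mono d"
  shows "\<forall>\<^sub>F m in sequentially. (if i = int (d m) + 1 then one else zero) = zero"
proof -
  have "int (d m) + 1 \<noteq> i" if "nat i \<le> m" for m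
    using that strict_mono_imp_increasing[OF assms, of m] by linarith
  then show ?thesis unfolding eventually_sequentially by metis
qed

theorem mainTheorem4:
  fixes fc fd :: "'a::finite \<Rightarrow> 'a \<Rightarrow> 'a \<Rightarrow> 'a"
    and zero one :: 'a
    and k0 :: nat
  assumes "zero \<noteq> one"
  shows "\<not> (deterministic_with_value fc fd (\<lambda>_. zero) 0 k0 zero \<and>
             (\<forall>j::int. j > 0 \<longrightarrow>
                deterministic_with_value fc fd (\<lambda>i. if i = j then one else zero) 0 k0 one))"
proof
  assume H: "deterministic_with_value fc fd (\<lambda>_. zero) 0 k0 zero \<and>
             (\<forall>j::int. j > 0 \<longrightarrow>
                deterministic_with_value fc fd (\<lambda>i. if i = j then one else zero) 0 k0 one)"
  define c where "c m = (\<lambda>i. if i = int m + 1 then one else zero)" for m :: nat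
  have "\<forall>m. \<exists>s. is_evolution fc fd (c m) s \<and> s 0 k0 = one"
    using H unfolding c_def deterministic_with_value_def by auto
  then obtain t where t: "\<And>m. is_evolution fc fd (c m) (t m)" "\<And>m. t m 0 k0 = one"
    by metis
  obtain d L where d: "strict_mono d"
    and lim: "\<And>x. \<forall>\<^sub>F m in sequentially. case_prod (t (d m)) x = L x"
    using pointwise_convergent_subseq[of "\<lambda>m. case_prod (t m)"] by blast
  have "is_evolution fc fd (\<lambda>_. zero) (curry L)"
  proof (rule evolution_pointwise_limit)
    show "is_evolution fc fd (c (d m)) (t (d m))" for m using t(1) .
    show "\<forall>\<^sub>F m in sequentially. c (d m) i = zero" for i
      unfolding c_def using single_cell_escapes[OF d] .
    show "\<forall>\<^sub>F m in sequentially. t (d m) i k = curry L i k" for i k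
      using lim[of "(i, k)"] by simp
  qed
  moreover have "curry L 0 k0 = one"
    using lim[of "(0, k0)"] t(2) by (simp add: eventually_mono)
  moreover obtain s0 where "is_evolution fc fd (\<lambda>_. zero) s0" "s0 0 k0 = zero"
    and "deterministic fc fd (\<lambda>_. zero) 0 k0"
    using H unfolding deterministic_with_value_def by blast
  ultimately show False
    using \<open>zero \<noteq> one\<close> unfolding deterministic_def by metis
qed

end
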